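(* For each $n\in\mathbb{N}$ there is a constant $C_n\ge1$ such that for every $s>0$ and every integer $k>1$, the finite group $\mathbb{Z}_k^n$ with the metric $d_k^n$ has a cover $\{\mathcal U_0,\dots,\mathcal U_n\}$ such that the $s$-scale connected components of each $\mathcal U_i$ have diameter at most $C_n s$.
   Context: $d_k$ is the canonical word metric on the cyclic group $\mathbb{Z}_k$ (with respect to the generator $\pm1$), i.e. $d_k(a,b)=\min\{|a-b| \bmod k,\ k-(|a-b|\bmod k)\}$, and $d_k^n((x_1,\dots,x_n),(y_1,\dots,y_n))=\sum_{i=1}^n d_k(x_i,y_i)$. For $s>0$, the $s$-scale connected components of a subset $U$ are the classes of the relation "joined by a finite chain $x_0,\dots,x_m$ in $U$ with $d(x_i,x_{i+1})<s$". *)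

theory Defs
  imports Complex_Main
begin

text \<open>Canonical word metric on the cyclic group Z_k (elements represented by integers).\<close>
definition dk :: "int \<Rightarrow> int \<Rightarrow> int \<Rightarrow> int" where
  "dk k a b = min (\<bar>a - b\<bar> mod k) (k - (\<bar>a - b\<bar> mod k))"

definition Zkn :: "int \<Rightarrow> nat \<Rightarrow> int list set" where
  "Zkn k n = {xs. length xs = n \<and> set xs \<subseteq> {0..<k}}"

definition dkn :: "int \<Rightarrow> int list \<Rightarrow> int list \<Rightarrow> int" where
  "dkn k xs ys = (\<Sum>i<length xs. dk k (xs ! i) (ys ! i))"

definition scale_rel :: "('a \<Rightarrow> 'a \<Rightarrow> real) \<Rightarrow> real \<Rightarrow> 'a set \<Rightarrow> ('a \<times> 'a) set" where
  "scale_rel d s U = ({(x, y). x \<in> U \<and> y \<in> U \<and> d x y < s})\<^sup>*"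

definition scale_components :: "('a \<Rightarrow> 'a \<Rightarrow> real) \<Rightarrow> real \<Rightarrow> 'a set \<Rightarrow> 'a set set" where
  "scale_components d s U = {scale_rel d s U `` {x} | x. x \<in> U}"

definition diam_d :: "('a \<Rightarrow> 'a \<Rightarrow> real) \<Rightarrow> 'a set \<Rightarrow> real" where
  "diam_d d A = Sup {d x y | x y. x \<in> A \<and> y \<in> A}"

end

theory Submission
  imports Defs
begin

text \<open>
  Let r = \<lceil>s\<rceil>, m = 2r+1 and L = (n+1)m.  Cut the circle Z_k into cells
  [jL, (j+1)L) of length L (the last cell absorbs the remainder), and call a point of Z_k
  far from the walls if its circular distance to every cell wall jL exceeds r.  For i = 0..n
  let U_i consist of the points of Z_k^n all of whose coordinates are far from the walls after
  rotating by i*m.  A coordinate value can be close to a wall for at most one rotation, since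
  the walls of two different rotated partitions are more than 2r apart; as a point has only n
  coordinates, pigeonhole puts it in some U_i.  Inside U_i a step of length < s \<le> r never
  changes the cell of a rotated coordinate, so the vector of cells is constant on
  s-components, which therefore have diameter at most n*2L = O(n^2 s).  Very small scales
  (s \<le> 1, where components are points) and very small groups (k < L, where the whole group
  has diameter at most nk < 2nL) are handled by the cover by n+1 copies of Z_k^n.
  All three cases are instances of one general lemma, scale_component_diam_le: if f is
  constant along steps shorter than s and d is bounded by B on the fibres of f, then all
  s-components have diameter at most B.
\<close>

section \<open>The word metric on Z_k\<close>

lemma dk_alt: "k > 0 \<Longrightarrow> dk k a b = min ((a - b) mod k) (k - (a - b) mod k)"
proof -
  assume k: "k > 0"
  show ?thesis
  proof (cases "a - b \<ge> 0")
    case True then show ?thesis by (simp add: dk_def)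
  next
    case False
    have e: "\<bar>a - b\<bar> = -(a - b)" using False by simp
    show ?thesis
    proof (cases "(a - b) mod k = 0")
      case True
      then have "k dvd (b - a)" by (simp add: mod_eq_0_iff_dvd dvd_diff_commute)
      then have "(-(a - b)) mod k = 0" by simp
      then show ?thesis using True e by (simp add: dk_def)
    next
      case False
      then have "(-(a - b)) mod k = k - (a - b) mod k" using zmod_zminus1_eq_if[of "a - b" k] by simp
      then show ?thesis using e by (simp add: dk_def min.commute)
    qed
  qed
qed

lemma dk_nonneg: assumes "k > 0" shows "0 \<le> dk k a b"
proof -
  have "(a - b) mod k < k" "0 \<le> (a - b) mod k" using assms by simp_all
  then show ?thesis unfolding dk_alt[OF assms] by linarith
qed

lemma dk_le_k: assumes "k > 0" shows "dk k a b \<le> k"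
proof -
  have "0 \<le> (a - b) mod k" using assms by simp
  then show ?thesis unfolding dk_alt[OF assms] by linarith
qed

lemma dk_self: "k > 0 \<Longrightarrow> dk k a a = 0"
  by (simp add: dk_alt)

lemma dk_shift: "k > 0 \<Longrightarrow> dk k ((a - c) mod k) ((b - c) mod k) = dk k a b"
proof -
  assume k: "k > 0"
  have "((a - c) mod k - (b - c) mod k) mod k = (a - b) mod k"
    by (simp add: mod_diff_eq)
  then show ?thesis using k by (simp add: dk_alt)
qed

lemma dk_le: "k > 0 \<Longrightarrow> dk k a b \<le> \<bar>a - b - z * k\<bar>"
proof -
  assume k: "k > 0"
  define q where "q = (a - b) mod k"
  define w where "w = (a - b) div k"
  have d: "a - b - z * k = q + (w - z) * k" unfolding q_def w_def by (simp add: algebra_simps)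
  have q: "0 \<le> q" "q < k" using k unfolding q_def by auto
  have dk: "dk k a b = min q (k - q)" using k by (simp add: dk_alt q_def)
  show ?thesis
  proof (cases "w - z \<ge> 0")
    case True
    then have "0 \<le> (w - z) * k" using k by simp
    then show ?thesis using d dk q by linarith
  next
    case False
    then have "(w - z) * k \<le> -k" using k mult_right_mono[of "w - z" "-1" k] by simp
    then show ?thesis using d dk q by linarith
  qed
qed

lemma dk_ex: "k > 0 \<Longrightarrow> \<exists>z. dk k a b = \<bar>a - b - z * k\<bar>"
proof -
  assume k: "k > 0"
  define q where "q = (a - b) mod k"
  define w where "w = (a - b) div k"
  have d: "a - b = q + w * k" unfolding q_def w_def by (simp add: mult.commute)
  have q: "0 \<le> q" "q < k" using k unfolding q_def by auto
  show ?thesis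
  proof (cases "q \<le> k - q")
    case True
    then have "dk k a b = \<bar>a - b - w * k\<bar>" using k q d by (simp add: dk_alt q_def[symmetric])
    then show ?thesis by blast
  next
    case False
    then have "dk k a b = \<bar>a - b - (w + 1) * k\<bar>"
      using k q d by (simp add: dk_alt q_def[symmetric] algebra_simps)
    then show ?thesis by blast
  qed
qed

lemma dk_eq_0_imp_eq:
  assumes k: "k > 0" and a: "0 \<le> a" "a < k" and b: "0 \<le> b" "b < k" and d: "dk k a b = 0"
  shows "a = b"
proof -
  obtain z where z: "\<bar>a - b - z * k\<bar> = 0" using dk_ex[OF k, of a b] d by auto
  have "z = 0"
  proof (rule ccontr)
    assume "z \<noteq> 0"
    then have "k \<le> \<bar>z * k\<bar>" using k by (simp add: abs_mult)
    then show False using z a b by linarith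
  qed
  then show ?thesis using z by simp
qed

section \<open>The l1 metric on Z_k^n\<close>

lemma dkn_coord:
  assumes "k > 0" and "j < length y"
  shows "dk k (y ! j) (w ! j) \<le> dkn k y w"
  unfolding dkn_def using assms by (intro member_le_sum) (auto intro: dk_nonneg)

lemma dkn_bound:
  assumes "\<And>j. j < length y \<Longrightarrow> dk k (y ! j) (w ! j) \<le> B"
  shows "dkn k y w \<le> int (length y) * B"
  unfolding dkn_def using sum_bounded_above[of "{..<length y}" "\<lambda>j. dk k (y ! j) (w ! j)" B] assms
  by simp

lemma dkn_self: "k > 0 \<Longrightarrow> dkn k x x = 0"
  unfolding dkn_def by (simp add: dk_self)

lemma dkn_lt_1_imp_eq:
  assumes k: "k > 0" and x: "x \<in> Zkn k n" and y: "y \<in> Zkn k n" and d: "dkn k x y < 1"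
  shows "x = y"
proof (rule nth_equalityI)
  have l: "length x = n" "length y = n" "set x \<subseteq> {0..<k}" "set y \<subseteq> {0..<k}"
    using x y unfolding Zkn_def by auto
  then show "length x = length y" by simp
  fix j assume j: "j < length x"
  have "dk k (x ! j) (y ! j) = 0"
    using dkn_coord[OF k j, of y] dk_nonneg[OF k, of "x ! j" "y ! j"] d by simp
  moreover have "x ! j \<in> {0..<k}" "y ! j \<in> {0..<k}" using l j nth_mem by (metis subsetD)+
  ultimately show "x ! j = y ! j" using dk_eq_0_imp_eq[OF k] by auto
qed

section \<open>Scale components\<close>

lemma diam_le:
  assumes "x \<in> A" "\<And>y w. y \<in> A \<Longrightarrow> w \<in> A \<Longrightarrow> d y w \<le> B"
  shows "diam_d d A \<le> B"
  unfolding diam_d_def using assms by (intro cSup_least) auto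

text \<open>The basic tool: a function that cannot change along steps shorter than s is constant
  on s-components, so components have diameter at most the diameter bound B of its fibres.\<close>
lemma scale_component_diam_le:
  assumes short_step: "\<And>x y. x \<in> U \<Longrightarrow> y \<in> U \<Longrightarrow> d x y < s \<Longrightarrow> f x = f y"
    and fibre: "\<And>x y. x \<in> U \<Longrightarrow> y \<in> U \<Longrightarrow> f x = f y \<Longrightarrow> d x y \<le> B"
    and A: "A \<in> scale_components d s U"
  shows "diam_d d A \<le> B"
proof -
  obtain x where x: "x \<in> U" and A_eq: "A = scale_rel d s U `` {x}"
    using A unfolding scale_components_def by auto
  have chain: "y \<in> U \<and> f y = f x" if "(x, y) \<in> scale_rel d s U" for y
    using that unfolding scale_rel_def
  proof (induction rule: rtrancl_induct)
    case (step y w)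
    then have "y \<in> U" "w \<in> U" "d y w < s" by auto
    then show ?case using step.IH short_step by metis
  qed (use x in simp)
  then have in_fibre: "y \<in> U \<and> f y = f x" if "y \<in> A" for y using that A_eq by simp
  have "x \<in> A" unfolding A_eq scale_rel_def by simp
  then show ?thesis by (rule diam_le) (use in_fibre fibre in metis)
qed

definition bounded_cover :: "int \<Rightarrow> nat \<Rightarrow> real \<Rightarrow> real \<Rightarrow> (nat \<Rightarrow> int list set) \<Rightarrow> bool" where
  "bounded_cover k n s B U \<longleftrightarrow>
     (\<forall>i\<le>n. U i \<subseteq> Zkn k n) \<and> (\<Union>i\<le>n. U i) = Zkn k n \<and>
     (\<forall>i\<le>n. \<forall>A \<in> scale_components (\<lambda>x y. real_of_int (dkn k x y)) s (U i).
        diam_d (\<lambda>x y. real_of_int (dkn k x y)) A \<le> B)"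

lemma bounded_cover_mono: "bounded_cover k n s B U \<Longrightarrow> B \<le> B' \<Longrightarrow> bounded_cover k n s B' U"
  unfolding bounded_cover_def by force

lemma bounded_cover_single:
  assumes "\<And>A. A \<in> scale_components (\<lambda>x y. real_of_int (dkn k x y)) s (Zkn k n) \<Longrightarrow>
             diam_d (\<lambda>x y. real_of_int (dkn k x y)) A \<le> B"
  shows "bounded_cover k n s B (\<lambda>_. Zkn k n)"
  using assms unfolding bounded_cover_def by auto

lemma bounded_cover_small_scale:
  assumes k: "k > 0" and s: "s \<le> 1"
  shows "bounded_cover k n s 0 (\<lambda>_. Zkn k n)"
proof (rule bounded_cover_single, rule scale_component_diam_le[where f = id])
  fix x y assume "x \<in> Zkn k n" "y \<in> Zkn k n" "real_of_int (dkn k x y) < s"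
  then show "id x = id y" using dkn_lt_1_imp_eq[OF k] s by simp
next
  fix x y :: "int list" assume "id x = id y"
  then show "real_of_int (dkn k x y) \<le> 0" using dkn_self[OF k] by simp
qed

text \<open>Every pair of points of Z_k^n is at distance at most n*k.\<close>
lemma bounded_cover_whole_group:
  assumes k: "k > 0"
  shows "bounded_cover k n s (real_of_int (int n * k)) (\<lambda>_. Zkn k n)"
proof (rule bounded_cover_single, rule scale_component_diam_le[where f = "\<lambda>_. ()"])
  fix x y assume "x \<in> Zkn k n"
  then have "dkn k x y \<le> int n * k"
    using dkn_bound[of x k y k] dk_le_k[OF k] unfolding Zkn_def by simp
  then show "real_of_int (dkn k x y) \<le> real_of_int (int n * k)" by linarith
qed auto

section \<open>Cells and points far from the walls\<close>

text \<open>The cell [jL, (j+1)L) containing p; the last of the k div L cells absorbs the remainder.\<close>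
definition cell :: "int \<Rightarrow> int \<Rightarrow> int \<Rightarrow> int" where
  "cell k L p = min (p div L) (k div L - 1)"

definition far_from_walls :: "int \<Rightarrow> int \<Rightarrow> int \<Rightarrow> int \<Rightarrow> bool" where
  "far_from_walls k r L p \<longleftrightarrow> (\<forall>j. 0 \<le> j \<and> j < k div L \<longrightarrow> r < dk k p (j * L))"

definition rot_coord :: "int \<Rightarrow> int \<Rightarrow> nat \<Rightarrow> int \<Rightarrow> int" where
  "rot_coord k m i t = (t - int i * m) mod k"

lemma cell_mono: "0 < L \<Longrightarrow> p \<le> p' \<Longrightarrow> cell k L p \<le> cell k L p'"
  unfolding cell_def using zdiv_mono1[of p p' L] by (simp add: min_def)

lemma div_mult_bounds:
  fixes p L :: int assumes "L > 0"
  shows "(p div L) * L \<le> p" "p < (p div L + 1) * L"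
proof -
  show "(p div L) * L \<le> p" using assms by (simp add: mult.commute minus_mod_eq_mult_div[symmetric])
  show "p < (p div L + 1) * L" using assms
    by (metis add.commute mult.commute pos_mod_bound div_mult_mod_eq distrib_left mult_1_right
        add_less_cancel_left)
qed

text \<open>Moving a point far from the walls forward by at most r, without wrapping, stays in its cell:
  otherwise the wall of the new cell lies between the two points.\<close>
lemma cell_same_forward:
  assumes k: "k > 0" and L: "L > 0" "L \<le> k" and p: "0 \<le> p" "p \<le> p'" "p' < k"
    and d: "p' - p \<le> r" and g: "far_from_walls k r L p"
  shows "cell k L p = cell k L p'"
proof (rule ccontr)
  assume ne: "cell k L p \<noteq> cell k L p'"
  have lt: "cell k L p < cell k L p'" using cell_mono[OF L(1) p(2), of k] ne by simp
  define j where "j = cell k L p'"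
  have j1: "j \<le> k div L - 1" and j2: "j \<le> p' div L" unfolding j_def cell_def by simp_all
  have cp: "cell k L p = p div L" using lt j1 unfolding j_def cell_def by (simp add: min_def split: if_splits)
  have "0 \<le> p div L" using p L by (simp add: pos_imp_zdiv_nonneg_iff)
  then have j0: "0 \<le> j" using lt cp unfolding j_def by simp
  have "p < (p div L + 1) * L" by (rule div_mult_bounds[OF L(1)])
  also have "\<dots> \<le> j * L" using lt cp L(1) unfolding j_def by (intro mult_right_mono) auto
  finally have a1: "p < j * L" .
  have "j * L \<le> (p' div L) * L" using j2 L(1) by (intro mult_right_mono) auto
  also have "\<dots> \<le> p'" by (rule div_mult_bounds[OF L(1)])
  finally have a2: "j * L \<le> p'" .
  have "dk k p (j * L) \<le> \<bar>p - j * L - 0 * k\<bar>" by (rule dk_le[OF k])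
  then have "dk k p (j * L) \<le> r" using a1 a2 d by simp
  moreover have "r < dk k p (j * L)" using g j0 j1 unfolding far_from_walls_def by auto
  ultimately show False by simp
qed

text \<open>Two points far from the walls and within circular distance r lie in the same cell.  Wrapping around
  is impossible since 0 is itself a wall.\<close>
lemma cell_same:
  assumes k: "k > 0" and L: "L > 0" "L \<le> k" and p: "0 \<le> p" "p < k" "0 \<le> p'" "p' < k"
    and d: "dk k p p' \<le> r" and g: "far_from_walls k r L p" "far_from_walls k r L p'"
  shows "cell k L p = cell k L p'"
proof -
  obtain z where z: "\<bar>p - p' - z * k\<bar> \<le> r" using dk_ex[OF k, of p p'] d by auto
  have Q: "0 < k div L" using L zdiv_mono1[of L k L] by simp
  have far0: "r < q" if "far_from_walls k r L q" "0 \<le> q" for q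
  proof -
    have "r < dk k q (0 * L)" using that(1) Q unfolding far_from_walls_def by blast
    moreover have "dk k q (0 * L) \<le> \<bar>q - 0 * L - 0 * k\<bar>" by (rule dk_le[OF k])
    ultimately show ?thesis using that(2) by simp
  qed
  consider "z = 0" | "z \<ge> 1" | "z \<le> -1" by linarith
  then show ?thesis
  proof cases
    case 1
    show ?thesis
    proof (cases "p \<le> p'")
      case True
      then show ?thesis using cell_same_forward[OF k L p(1) True p(4) _ g(1)] z 1 by simp
    next
      case False
      then show ?thesis using cell_same_forward[OF k L p(3) _ p(2) _ g(2)] z 1 by simp
    qed
  next
    case 2
    then have "z * k \<ge> k" using k mult_right_mono[of 1 z k] by simp
    then show ?thesis using z p far0[OF g(2) p(3)] by linarith
  next
    case 3
    then have "z * k \<le> -k" using k mult_right_mono[of z "-1" k] by simp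
    then show ?thesis using z p far0[OF g(1) p(1)] by linarith
  qed
qed

lemma cell_diam:
  assumes L: "L > 0" and p: "0 \<le> p" "p < k" "0 \<le> p'" "p' < k"
    and c: "cell k L p = cell k L p'"
  shows "\<bar>p - p'\<bar> < 2 * L"
proof -
  define Q where "Q = k div L"
  have kQ: "k < (Q + 1) * L" unfolding Q_def by (rule div_mult_bounds[OF L])
  note lo = div_mult_bounds(1)[OF L] and hi = div_mult_bounds(2)[OF L]
  show ?thesis
  proof (cases "p div L \<ge> Q - 1 \<and> p' div L \<ge> Q - 1")
    case True
    have "(Q - 1) * L \<le> (p div L) * L" "(Q - 1) * L \<le> (p' div L) * L"
      using True L by (auto intro: mult_right_mono)
    then have "(Q - 1) * L \<le> p" "(Q - 1) * L \<le> p'" using lo[of p] lo[of p'] by linarith+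
    then show ?thesis using kQ p by (simp add: algebra_simps)
  next
    case False
    then have "p div L = p' div L"
      using c unfolding cell_def Q_def[symmetric] by (auto simp: min_def split: if_splits)
    then show ?thesis using lo[of p] lo[of p'] hi[of p] hi[of p'] by (simp add: algebra_simps)
  qed
qed

section \<open>The cover\<close>

lemma near_wall_if_not_far:
  assumes k: "k > 0" and nb: "\<not> far_from_walls k r L (rot_coord k m i t)"
  shows "\<exists>j z. 0 \<le> j \<and> j < k div L \<and> \<bar>t - int i * m - j * L - z * k\<bar> \<le> r"
proof -
  obtain j where j: "0 \<le> j" "j < k div L" "dk k (rot_coord k m i t) (j * L) \<le> r"
    using nb unfolding far_from_walls_def by force
  obtain z where z: "dk k (rot_coord k m i t) (j * L) = \<bar>rot_coord k m i t - j * L - z * k\<bar>"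
    using dk_ex[OF k] by blast
  define w where "w = (t - int i * m) div k"
  have "rot_coord k m i t = t - int i * m - w * k" unfolding rot_coord_def w_def
    by (simp add: minus_div_mult_eq_mod[symmetric] mult.commute)
  then have "\<bar>t - int i * m - j * L - (z + w) * k\<bar> \<le> r" using z j(3) by (simp add: algebra_simps)
  then show ?thesis using j by blast
qed

text \<open>The key combinatorial fact: a value t is close to a wall for at most one rotation i \<le> n.
  Two such rotations would give walls of the form e*m (0 < |e| < k/m) within 2r < m of a
  multiple of k.\<close>
lemma not_far_for_one_shift_only:
  assumes r: "r \<ge> 0" and m: "m = 2 * r + 1" and L: "L = (int n + 1) * m" and k: "0 < k" "L \<le> k"
    and i: "i \<le> n" "i' \<le> n" "i \<noteq> i'"
    and b1: "\<not> far_from_walls k r L (rot_coord k m i t)" and b2: "\<not> far_from_walls k r L (rot_coord k m i' t)"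
  shows False
proof -
  define Q where "Q = k div L"
  obtain j z where jz: "0 \<le> j" "j < Q" "\<bar>t - int i * m - j * L - z * k\<bar> \<le> r"
    using near_wall_if_not_far[OF k(1) b1] unfolding Q_def by blast
  obtain j' z' where jz': "0 \<le> j'" "j' < Q" "\<bar>t - int i' * m - j' * L - z' * k\<bar> \<le> r"
    using near_wall_if_not_far[OF k(1) b2] unfolding Q_def by blast
  define e where "e = (int i' - int i) + (j' - j) * (int n + 1)"
  define Z where "Z = z - z'"
  have "e * m - Z * k = (t - int i * m - j * L - z * k) - (t - int i' * m - j' * L - z' * k)"
    unfolding e_def Z_def L by (simp add: algebra_simps)
  then have key: "\<bar>e * m - Z * k\<bar> \<le> 2 * r" using jz(3) jz'(3) by linarith
  have mpos: "m > 0" using m r by simp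
  have QL: "Q * L \<le> k" unfolding Q_def using div_mult_bounds(1)[of L k] L mpos by simp
  have ii: "\<bar>int i' - int i\<bar> \<le> int n" "int i' - int i \<noteq> 0" using i by auto
  have e0: "e \<noteq> 0"
  proof (cases "j' = j")
    case False
    then have "1 * (int n + 1) \<le> \<bar>j' - j\<bar> * (int n + 1)" by (intro mult_right_mono) auto
    then have "int n + 1 \<le> \<bar>(j' - j) * (int n + 1)\<bar>" by (simp add: abs_mult)
    then show ?thesis using ii unfolding e_def by linarith
  qed (use ii e_def in simp)
  have "\<bar>(j' - j) * (int n + 1)\<bar> = \<bar>j' - j\<bar> * (int n + 1)" by (simp add: abs_mult)
  also have "\<dots> \<le> (Q - 1) * (int n + 1)" using jz jz' by (intro mult_right_mono) auto
  finally have "\<bar>e\<bar> \<le> int n + (Q - 1) * (int n + 1)" using ii unfolding e_def by linarith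
  then have "\<bar>e\<bar> \<le> Q * (int n + 1) - 1" by (simp add: algebra_simps)
  then have "\<bar>e\<bar> * m \<le> (Q * (int n + 1) - 1) * m" using mpos by (intro mult_right_mono) auto
  then have em: "\<bar>e * m\<bar> \<le> k - m" using QL mpos unfolding L by (simp add: abs_mult algebra_simps)
  have em1: "m \<le> \<bar>e * m\<bar>" using e0 mpos by (simp add: abs_mult)
  show False
  proof (cases "Z = 0")
    case True then show ?thesis using key em1 m by simp
  next
    case False
    then have "k \<le> \<bar>Z * k\<bar>" using k mult_right_mono[of 1 "\<bar>Z\<bar>" k] by (simp add: abs_mult)
    then show ?thesis using key em m by linarith
  qed
qed

definition cover_set :: "int \<Rightarrow> int \<Rightarrow> int \<Rightarrow> int \<Rightarrow> nat \<Rightarrow> nat \<Rightarrow> int list set" where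
  "cover_set k r L m n i = {xs \<in> Zkn k n. \<forall>t \<in> set xs. far_from_walls k r L (rot_coord k m i t)}"

text \<open>Pigeonhole: the n coordinates spoil at most n of the n+1 rotations.\<close>
lemma cover_set_covers:
  assumes r: "r \<ge> 0" and m: "m = 2 * r + 1" and L: "L = (int n + 1) * m" and k: "0 < k" "L \<le> k"
    and x: "xs \<in> Zkn k n"
  shows "\<exists>i\<le>n. xs \<in> cover_set k r L m n i"
proof (rule ccontr)
  assume "\<not> ?thesis"
  then have "\<forall>i\<in>{..n}. \<exists>t. t \<in> set xs \<and> \<not> far_from_walls k r L (rot_coord k m i t)"
    using x unfolding cover_set_def by auto
  then obtain f where f: "\<And>i. i \<in> {..n} \<Longrightarrow> f i \<in> set xs \<and> \<not> far_from_walls k r L (rot_coord k m i (f i))"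
    by metis
  have "inj_on f {..n}"
    using not_far_for_one_shift_only[OF r m L k] f by (intro inj_onI) (metis atMost_iff)
  then have "card {..n} \<le> card (set xs)" using f by (intro card_inj_on_le) auto
  also have "\<dots> \<le> length xs" by (rule card_length)
  finally show False using x unfolding Zkn_def by simp
qed

lemma rot_coord_bounds: "k > 0 \<Longrightarrow> 0 \<le> rot_coord k m i t \<and> rot_coord k m i t < k"
  unfolding rot_coord_def by simp

lemma dk_rot_coord: "k > 0 \<Longrightarrow> dk k (rot_coord k m i a) (rot_coord k m i b) = dk k a b"
  unfolding rot_coord_def by (rule dk_shift)

lemma cover_set_memD:
  "xs \<in> cover_set k r L m n i \<Longrightarrow> length xs = n \<and> (\<forall>j<n. far_from_walls k r L (rot_coord k m i (xs ! j)))"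
  unfolding cover_set_def Zkn_def by auto

definition cells :: "int \<Rightarrow> int \<Rightarrow> int \<Rightarrow> nat \<Rightarrow> int list \<Rightarrow> int list" where
  "cells k L m i xs = map (\<lambda>t. cell k L (rot_coord k m i t)) xs"

lemma cells_short_step:
  assumes k: "0 < k" "0 < L" "L \<le> k" and s: "s \<le> real_of_int r"
    and x: "x \<in> cover_set k r L m n i" and y: "y \<in> cover_set k r L m n i"
    and d: "real_of_int (dkn k x y) < s"
  shows "cells k L m i x = cells k L m i y"
proof -
  note rot = rot_coord_bounds[OF k(1)]
  have "cell k L (rot_coord k m i (x ! j)) = cell k L (rot_coord k m i (y ! j))" if j: "j < n" for j
  proof (rule cell_same[OF k])
    have "dk k (x ! j) (y ! j) \<le> dkn k x y" using dkn_coord[OF k(1)] cover_set_memD[OF x] j by simp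
    then have "real_of_int (dk k (x ! j) (y ! j)) < real_of_int r" using d s by linarith
    then show "dk k (rot_coord k m i (x ! j)) (rot_coord k m i (y ! j)) \<le> r"
      unfolding dk_rot_coord[OF k(1)] by simp
  qed (use rot cover_set_memD[OF x] cover_set_memD[OF y] j in auto)
  then show ?thesis using cover_set_memD[OF x] cover_set_memD[OF y]
    unfolding cells_def by (simp add: list_eq_iff_nth_eq)
qed

lemma cells_fibre_bound:
  assumes k: "0 < k" "0 < L"
    and x: "x \<in> cover_set k r L m n i" and y: "y \<in> cover_set k r L m n i"
    and c: "cells k L m i x = cells k L m i y"
  shows "dkn k x y \<le> int n * (2 * L)"
proof -
  note rot = rot_coord_bounds[OF k(1)]
  have len: "length x = n" "length y = n" using cover_set_memD[OF x] cover_set_memD[OF y] by simp_all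
  have "dk k (x ! j) (y ! j) \<le> 2 * L" if j: "j < length x" for j
  proof -
    have "cells k L m i x ! j = cells k L m i y ! j" using c by simp
    then have "cell k L (rot_coord k m i (x ! j)) = cell k L (rot_coord k m i (y ! j))"
      using j len unfolding cells_def by simp
    then have "\<bar>rot_coord k m i (x ! j) - rot_coord k m i (y ! j)\<bar> < 2 * L"
      using cell_diam[OF k(2)] rot by blast
    moreover have "dk k (rot_coord k m i (x ! j)) (rot_coord k m i (y ! j))
        \<le> \<bar>rot_coord k m i (x ! j) - rot_coord k m i (y ! j) - 0 * k\<bar>"
      by (rule dk_le[OF k(1)])
    ultimately show ?thesis unfolding dk_rot_coord[OF k(1)] by simp
  qed
  then show ?thesis using dkn_bound[of x k y "2 * L"] len by simp
qed

lemma bounded_cover_main: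
  assumes r: "r \<ge> 0" and m: "m = 2 * r + 1" and L: "L = (int n + 1) * m" and k: "0 < k" "L \<le> k"
    and s: "s \<le> real_of_int r"
  shows "bounded_cover k n s (real_of_int (int n * (2 * L))) (cover_set k r L m n)"
proof -
  have Lpos: "L > 0" using L m r by simp
  have cover: "(\<Union>i\<le>n. cover_set k r L m n i) = Zkn k n"
    using cover_set_covers[OF r m L k] unfolding cover_set_def by blast
  have "diam_d (\<lambda>x y. real_of_int (dkn k x y)) A \<le> real_of_int (int n * (2 * L))"
    if "A \<in> scale_components (\<lambda>x y. real_of_int (dkn k x y)) s (cover_set k r L m n i)" for i A
  proof (rule scale_component_diam_le[where f = "cells k L m i", OF _ _ that])
    show "cells k L m i x = cells k L m i y"
      if "x \<in> cover_set k r L m n i" "y \<in> cover_set k r L m n i" "real_of_int (dkn k x y) < s" for x y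
      using cells_short_step[OF k(1) Lpos k(2) s that] .
    show "real_of_int (dkn k x y) \<le> real_of_int (int n * (2 * L))"
      if "x \<in> cover_set k r L m n i" "y \<in> cover_set k r L m n i"
        "cells k L m i x = cells k L m i y" for x y
      using cells_fibre_bound[OF k(1) Lpos that] by (simp only: of_int_le_iff)
  qed
  then show ?thesis
    using cover unfolding bounded_cover_def by (auto simp: cover_set_def)
qed

lemma scale_bound:
  assumes s: "s > 1"
  shows "real_of_int (int n * (2 * ((int n + 1) * (2 * \<lceil>s\<rceil> + 1)))) \<le> 10 * (real n + 1)^2 * s"
proof -
  have "real_of_int \<lceil>s\<rceil> \<le> s + 1" by (rule of_int_ceiling_le_add_one)
  then have "2 * real_of_int \<lceil>s\<rceil> + 1 \<le> 5 * s" using s by linarith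
  then have m5: "real_of_int (2 * \<lceil>s\<rceil> + 1) \<le> 5 * s" by simp
  have "real_of_int (int n * (2 * ((int n + 1) * (2 * \<lceil>s\<rceil> + 1))))
      = (2 * real n * (real n + 1)) * real_of_int (2 * \<lceil>s\<rceil> + 1)" by simp
  also have "\<dots> \<le> (2 * real n * (real n + 1)) * (5 * s)" using m5 by (intro mult_left_mono) auto
  also have "\<dots> \<le> 10 * ((real n + 1) * (real n + 1)) * s" using s by (simp add: algebra_simps)
  finally show ?thesis by (simp add: power2_eq_square)
qed

lemma bounded_cover_exists:
  assumes s: "s > 0" and k: "k > 1"
  shows "\<exists>U. bounded_cover k n s (10 * (real n + 1)^2 * s) U"
proof (cases "s \<le> 1")
  case True
  have "bounded_cover k n s 0 (\<lambda>_. Zkn k n)" using bounded_cover_small_scale[OF _ True] k by simp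
  moreover have "0 \<le> 10 * (real n + 1)^2 * s" using s by simp
  ultimately show ?thesis by (meson bounded_cover_mono)
next
  case False
  define r where "r = \<lceil>s\<rceil>"
  define L where "L = (int n + 1) * (2 * r + 1)"
  have B: "real_of_int (int n * (2 * L)) \<le> 10 * (real n + 1)^2 * s"
    using scale_bound[of s n] False unfolding L_def r_def by simp
  show ?thesis
  proof (cases "k < L")
    case True
    then have "int n * k \<le> int n * (2 * L)" using k by (intro mult_left_mono) auto
    then have "real_of_int (int n * k) \<le> 10 * (real n + 1)^2 * s" using B by linarith
    moreover have "bounded_cover k n s (real_of_int (int n * k)) (\<lambda>_. Zkn k n)"
      using bounded_cover_whole_group[of k n s] k by simp
    ultimately show ?thesis by (meson bounded_cover_mono)
  next
    case False
    have "r \<ge> 0" "s \<le> real_of_int r" using s unfolding r_def by simp_all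
    then have "bounded_cover k n s (real_of_int (int n * (2 * L))) (cover_set k r L (2 * r + 1) n)"
      using bounded_cover_main[OF _ refl L_def, of k s] False k by simp
    then show ?thesis using B by (meson bounded_cover_mono)
  qed
qed

theorem lemma4p9:
  "\<forall>n::nat. \<exists>C::real. C \<ge> 1 \<and>
     (\<forall>(s::real) (k::int). s > 0 \<longrightarrow> k > 1 \<longrightarrow>
        (\<exists>U :: nat \<Rightarrow> int list set.
           (\<forall>i\<le>n. U i \<subseteq> Zkn k n) \<and> (\<Union>i\<le>n. U i) = Zkn k n \<and>
           (\<forall>i\<le>n. \<forall>A \<in> scale_components (\<lambda>x y. real_of_int (dkn k x y)) s (U i).
               diam_d (\<lambda>x y. real_of_int (dkn k x y)) A \<le> C * s)))"
proof
  fix n :: nat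
  have "1 \<le> (real n + 1)^2" by (simp add: one_le_power)
  then have "10 * (real n + 1)^2 \<ge> 1" by linarith
  then show "\<exists>C::real. C \<ge> 1 \<and> (\<forall>(s::real) (k::int). s > 0 \<longrightarrow> k > 1 \<longrightarrow>
      (\<exists>U. (\<forall>i\<le>n. U i \<subseteq> Zkn k n) \<and> (\<Union>i\<le>n. U i) = Zkn k n \<and>
        (\<forall>i\<le>n. \<forall>A \<in> scale_components (\<lambda>x y. real_of_int (dkn k x y)) s (U i).
           diam_d (\<lambda>x y. real_of_int (dkn k x y)) A \<le> C * s)))"
    using bounded_cover_exists[of _ _ n] unfolding bounded_cover_def by blast
qed

end
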